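(* There exists a countable family of closed intervals $(B_\omega)_{\omega\in\Sigma_*}$ contained in $[0,1]$, indexed by the set $\Sigma_*=\bigcup_{n\ge0}\{0,1\}^n$ of finite binary words, such that $\lambda(\limsup_\omega B_\omega)>0$, but for every $a>1$, if $E_\omega$ denotes the interval with the same center as $B_\omega$ and length $|B_\omega|^a$, then $\limsup_\omega E_\omega=\emptyset$. (Here the limsup over the countable family is the set of points lying in infinitely many members.)
   Context: $\lambda$ is Lebesgue measure on $\mathbb R$ and $|B|$ denotes the length of an interval $B$. *)

theory Defs
  imports "HOL-Analysis.Analysis"
begin

definition limsup_family :: "('i \<Rightarrow> 'a set) \<Rightarrow> 'a set" where
  "limsup_family F = {x. infinite {i. x \<in> F i}}"

definition dilated_interval :: "real \<Rightarrow> real \<Rightarrow> real \<Rightarrow> real set" where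
  "dilated_interval a l r =
     {(l + r) / 2 - (r - l) powr a / 2 .. (l + r) / 2 + (r - l) powr a / 2}"

end

theory Submission
  imports Defs "HOL-Real_Asymp.Real_Asymp"
begin

text \<open>A Cantor-type construction: the interval of a word w of length n has length
  s n = (n + 2) / (2 (n + 1) 2^n), and its two children are its two end intervals of
  length s (n + 1), leaving an open gap of length g n = s n - 2 s (n + 1) = 1 / (2 (n + 1) (n + 2) 2^n)
  in the middle. The 2^n gaps of level n have total length 1/(2(n+1)) - 1/(2(n+2)), so all
  gaps together have measure at most 1/2; every point of [0,1] outside the gaps lies in an
  interval of every level, whence the limsup has measure at least 1/2.
  On the other hand (s n) powr a is exponentially smaller than g n when a > 1, so for deep
  words the dilated interval lies inside the gap, which meets no interval of any deeper level.\<close>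

definition cell_len :: "nat \<Rightarrow> real" where
  "cell_len n = (real n + 2) / (2 * (real n + 1) * 2 ^ n)"

definition gap_len :: "nat \<Rightarrow> real" where
  "gap_len n = cell_len n - 2 * cell_len (Suc n)"

lemma gap_len_eq: "gap_len n = 1 / (2 * (real n + 1) * (real n + 2) * 2 ^ n)"
proof -
  have "real n + 1 > 0" "real n + 2 > 0" by auto
  then show ?thesis unfolding gap_len_def cell_len_def by (simp add: divide_simps) algebra
qed

lemma cell_len_pos: "cell_len n > 0"
  unfolding cell_len_def by (intro divide_pos_pos) auto

lemma gap_len_pos: "gap_len n > 0"
  unfolding gap_len_eq by (intro divide_pos_pos) auto

lemma cell_len_0 [simp]: "cell_len 0 = 1"
  unfolding cell_len_def by simp

lemma level_gap_len_telescoping: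
  "2 ^ n * gap_len n = 1 / (2 * (real n + 1)) - 1 / (2 * (real (Suc n) + 1))"
proof -
  have "real n + 1 > 0" "real n + 2 > 0" by auto
  then show ?thesis unfolding gap_len_eq by (simp add: divide_simps)
qed

lemma cell_len_powr_less_gap_len:
  assumes "a > 1"
  shows "eventually (\<lambda>n. cell_len n powr a < gap_len n) sequentially"
  unfolding gap_len_eq cell_len_def using assms by real_asymp

text \<open>Words are extended at the front: the children of w are False # w (left end)
  and True # w (right end).\<close>
fun cell_left :: "bool list \<Rightarrow> real" where
  "cell_left [] = 0"
| "cell_left (b # w) =
     cell_left w + (if b then cell_len (length w) - cell_len (Suc (length w)) else 0)"

definition cell :: "bool list \<Rightarrow> real set" where
  "cell w = {cell_left w .. cell_left w + cell_len (length w)}"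

definition gap :: "bool list \<Rightarrow> real set" where
  "gap w = {cell_left w + cell_len (Suc (length w)) <..<
            cell_left w + cell_len (length w) - cell_len (Suc (length w))}"

lemma cell_Cons_subset: "cell (b # w) \<subseteq> cell w"
  using gap_len_pos[of "length w"] cell_len_pos[of "Suc (length w)"]
  unfolding gap_len_def cell_def by auto

lemma cell_in_unit_interval: "0 \<le> cell_left w \<and> cell_left w + cell_len (length w) \<le> 1"
proof (induction w)
  case (Cons b w)
  then show ?case
    using gap_len_pos[of "length w"] cell_len_pos[of "Suc (length w)"]
    unfolding gap_len_def by auto
qed simp

lemma gap_subset_cell: "gap w \<subseteq> cell w"
  unfolding gap_def cell_def using cell_len_pos[of "Suc (length w)"] by auto

lemma emeasure_gap: "emeasure lebesgue (gap w) = ennreal (gap_len (length w))"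
proof -
  have "cell_left w + cell_len (Suc (length w))
      \<le> cell_left w + cell_len (length w) - cell_len (Suc (length w))"
    using gap_len_pos[of "length w"] unfolding gap_len_def by simp
  then show ?thesis unfolding gap_def gap_len_def by simp
qed

lemma cells_disjoint:
  "length v = length w \<Longrightarrow> v \<noteq> w \<Longrightarrow> cell v \<inter> cell w = {}"
proof (induction v arbitrary: w)
  case (Cons b v)
  then obtain c w' where w: "w = c # w'" and len: "length v = length w'"
    by (cases w) auto
  show ?case
  proof (cases "v = w'")
    case True
    with Cons.prems w have "b \<noteq> c" by simp
    with True w show ?thesis
      using gap_len_pos[of "length w'"] unfolding gap_len_def cell_def by (cases b; cases c) auto
  next
    case False
    with Cons.IH len have "cell v \<inter> cell w' = {}" by blast
    with w show ?thesis using cell_Cons_subset[of b v] cell_Cons_subset[of c w'] by blast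
  qed
qed simp

lemma gap_disjoint_child_level:
  assumes "x \<in> gap w" and "length u = Suc (length w)"
  shows "x \<notin> cell u"
proof -
  obtain b v where u: "u = b # v" and len: "length v = length w"
    using assms(2) by (cases u) auto
  show ?thesis
  proof (cases "v = w")
    case True
    with assms(1) u show ?thesis unfolding cell_def gap_def by (cases b) auto
  next
    case False
    with len have "cell v \<inter> cell w = {}" by (rule cells_disjoint)
    with assms(1) u show ?thesis using gap_subset_cell[of w] cell_Cons_subset[of b v] by blast
  qed
qed

lemma not_in_cell_deeper:
  assumes "\<And>u. length u = k \<Longrightarrow> x \<notin> cell u" and "k \<le> length v"
  shows "x \<notin> cell v"
  using assms(2)
proof (induction v)
  case (Cons b v)
  show ?case
  proof (cases "length (b # v) = k")
    case False
    with Cons have "x \<notin> cell v" by simp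
    then show ?thesis using cell_Cons_subset[of b v] by blast
  qed (use assms(1) in blast)
qed (use assms(1) in simp)

lemma gap_disjoint_deeper_cell:
  "x \<in> gap w \<Longrightarrow> length w < length v \<Longrightarrow> x \<notin> cell v"
  using not_in_cell_deeper[of "Suc (length w)" x v] gap_disjoint_child_level by simp

lemma in_cell_of_every_level:
  assumes "x \<in> {0..1}" and "\<And>w. x \<notin> gap w"
  shows "\<exists>w. length w = n \<and> x \<in> cell w"
proof (induction n)
  case 0
  from assms(1) show ?case by (intro exI[of _ "[]"]) (simp add: cell_def)
next
  case (Suc n)
  then obtain w where w: "length w = n" "x \<in> cell w" by blast
  with assms(2)[of w] have "x \<in> cell (False # w) \<or> x \<in> cell (True # w)"
    unfolding cell_def gap_def by auto
  with w(1) show ?case by (metis length_Cons)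
qed

lemma infinite_lists_iff_unbounded_length:
  fixes A :: "'a :: finite list set"
  shows "infinite A \<longleftrightarrow> (\<forall>N. \<exists>w\<in>A. N \<le> length w)"
proof
  assume "infinite A"
  show "\<forall>N. \<exists>w\<in>A. N \<le> length w"
  proof (rule ccontr)
    assume "\<not> ?thesis"
    then obtain N where "\<forall>w\<in>A. length w < N" by (auto simp: not_le)
    then have "A \<subseteq> {w. length w \<le> N}" by fastforce
    with \<open>infinite A\<close> show False
      using finite_lists_length_le[of "UNIV :: 'a set" N] finite_subset by auto
  qed
next
  assume unbounded: "\<forall>N. \<exists>w\<in>A. N \<le> length w"
  show "infinite A"
  proof
    assume "finite A"
    then obtain M where "\<And>w. w \<in> A \<Longrightarrow> length w \<le> M"
      using finite_nat_set_iff_bounded_le[of "length ` A"] by auto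
    moreover obtain w where "w \<in> A" "Suc M \<le> length w" using unbounded by blast
    ultimately show False by fastforce
  qed
qed

lemma in_limsup_family_lists_iff:
  fixes F :: "'a :: finite list \<Rightarrow> 'b set"
  shows "x \<in> limsup_family F \<longleftrightarrow> (\<forall>N. \<exists>w. N \<le> length w \<and> x \<in> F w)"
  unfolding limsup_family_def infinite_lists_iff_unbounded_length by auto

lemma dilated_interval_subset:
  assumes "(r - l) powr a < (r - l) - 2 * t"
  shows "dilated_interval a l r \<subseteq> {l + t <..< r - t}"
  using assms unfolding dilated_interval_def by (auto simp: field_simps)

lemma dilated_cell_subset_gap:
  assumes "cell_len (length w) powr a < gap_len (length w)"
  shows "dilated_interval a (cell_left w) (cell_left w + cell_len (length w)) \<subseteq> gap w"
proof -
  have "dilated_interval a (cell_left w) (cell_left w + cell_len (length w))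
      \<subseteq> {cell_left w + cell_len (Suc (length w)) <..<
          (cell_left w + cell_len (length w)) - cell_len (Suc (length w))}"
    by (rule dilated_interval_subset) (use assms in \<open>simp add: gap_len_def\<close>)
  then show ?thesis unfolding gap_def .
qed

lemma limsup_dilated_cells_empty:
  assumes "a > 1"
  shows "limsup_family (\<lambda>w. dilated_interval a (cell_left w) (cell_left w + cell_len (length w))) = {}"
    (is "limsup_family ?E = {}")
proof -
  obtain N where N: "\<And>w. N \<le> length w \<Longrightarrow> ?E w \<subseteq> gap w"
    using cell_len_powr_less_gap_len[OF assms] dilated_cell_subset_gap
    unfolding eventually_sequentially by blast
  have False if "x \<in> limsup_family ?E" for x
  proof -
    note deep = that[unfolded in_limsup_family_lists_iff]
    then obtain w where w: "N \<le> length w" "x \<in> ?E w" by blast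
    from deep obtain v where v: "Suc (length w) \<le> length v" "x \<in> ?E v" by blast
    from w N have "x \<in> gap w" by blast
    moreover have "x \<in> cell v"
      using v w(1) N[of v] gap_subset_cell[of v] by auto
    ultimately show False using gap_disjoint_deeper_cell v(1) by simp
  qed
  then show ?thesis by blast
qed

lemma emeasure_gap_level_le:
  "emeasure lebesgue (\<Union>w\<in>{w. length w = n}. gap w)
     \<le> ennreal (1 / (2 * (real n + 1)) - 1 / (2 * (real (Suc n) + 1)))"
proof -
  have "emeasure lebesgue (\<Union>w\<in>{w. length w = n}. gap w)
      \<le> (\<Sum>w\<in>{w. length w = n}. emeasure lebesgue (gap w))"
    using finite_lists_length_eq[of "UNIV :: bool set" n]
    by (intro emeasure_subadditive_finite) (auto simp: gap_def)
  also have "\<dots> = (\<Sum>w\<in>{w::bool list. length w = n}. ennreal (gap_len n))"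
    by (intro sum.cong) (simp_all add: emeasure_gap)
  also have "\<dots> = ennreal (2 ^ n * gap_len n)"
    using card_lists_length_eq[of "UNIV :: bool set" n] gap_len_pos[of n]
    by (simp add: ennreal_mult ennreal_power[symmetric])
  finally show ?thesis unfolding level_gap_len_telescoping .
qed

lemma emeasure_gaps_le: "emeasure lebesgue (\<Union>w. gap w) \<le> ennreal (1 / 2)"
proof -
  define h where "h n = 1 / (2 * (real n + 1))" for n
  have levels: "(\<Union>w. gap w) = (\<Union>n. \<Union>w\<in>{w. length w = n}. gap w)" by blast
  have "emeasure lebesgue (\<Union>w. gap w)
      \<le> (\<Sum>n. emeasure lebesgue (\<Union>w\<in>{w. length w = n}. gap w))"
    unfolding levels by (intro emeasure_subadditive_countably) (auto simp: gap_def)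
  also have "\<dots> \<le> (\<Sum>n. ennreal (h n - h (Suc n)))"
    using emeasure_gap_level_le by (intro suminf_le summableI) (simp add: h_def)
  also have "\<dots> = ennreal (h 0 - 0)"
  proof (rule suminf_ennreal_eq)
    show "0 \<le> h n - h (Suc n)" for n
      unfolding h_def by (simp add: field_simps)
    have "h \<longlonglongrightarrow> 0"
      unfolding h_def by real_asymp
    then show "(\<lambda>n. h n - h (Suc n)) sums (h 0 - 0)"
      by (rule telescope_sums')
  qed
  finally show ?thesis by (simp add: h_def)
qed

lemma limsup_cells_sets: "limsup_family cell \<in> sets lebesgue"
proof -
  have "limsup_family cell = (\<Inter>N. \<Union>w\<in>{w. N \<le> length w}. cell w)"
    unfolding set_eq_iff in_limsup_family_lists_iff by auto
  also have "\<dots> \<in> sets lebesgue"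
    by (intro sets.countable_INT sets.countable_UN) (auto simp: cell_def)
  finally show ?thesis .
qed

lemma emeasure_limsup_cells_pos: "emeasure lebesgue (limsup_family cell) > 0"
proof -
  let ?G = "\<Union>w. gap w"
  have G_sets: "?G \<in> sets lebesgue"
    unfolding gap_def by (intro sets.countable_UN) auto
  have "{0..1} - ?G \<subseteq> limsup_family cell"
    using in_cell_of_every_level unfolding subset_iff in_limsup_family_lists_iff
    by (metis Diff_iff UN_I UNIV_I order_refl)
  then have "emeasure lebesgue ({0..1} - ?G) \<le> emeasure lebesgue (limsup_family cell)"
    by (intro emeasure_mono limsup_cells_sets)
  moreover have "(1::ennreal) \<le> emeasure lebesgue ({0..1} - ?G) + ennreal (1 / 2)"
  proof -
    have "(1::ennreal) = emeasure lebesgue {0..1::real}" by simp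
    also have "\<dots> \<le> emeasure lebesgue (({0..1} - ?G) \<union> ?G)"
      using G_sets by (intro emeasure_mono) auto
    also have "\<dots> \<le> emeasure lebesgue ({0..1} - ?G) + emeasure lebesgue ?G"
      using G_sets by (intro emeasure_subadditive) auto
    also have "\<dots> \<le> emeasure lebesgue ({0..1} - ?G) + ennreal (1 / 2)"
      by (intro add_left_mono emeasure_gaps_le)
    finally show ?thesis .
  qed
  ultimately have "(1::ennreal) \<le> emeasure lebesgue (limsup_family cell) + ennreal (1 / 2)"
    by (meson add_right_mono order_trans)
  then show ?thesis
    by (smt (verit, best) add_0 ennreal_ge_1 gr_zeroI le_divide_eq_1)
qed

theorem mainTheorem6:
  shows "\<exists>(l :: bool list \<Rightarrow> real) (r :: bool list \<Rightarrow> real).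
     (\<forall>w. 0 \<le> l w \<and> l w < r w \<and> r w \<le> 1) \<and>
     emeasure lebesgue (limsup_family (\<lambda>w. {l w .. r w})) > 0 \<and>
     (\<forall>a :: real. a > 1 \<longrightarrow>
        limsup_family (\<lambda>w. dilated_interval a (l w) (r w)) = {})"
proof (intro exI conjI allI impI)
  fix w
  show "0 \<le> cell_left w" and "cell_left w + cell_len (length w) \<le> 1"
    using cell_in_unit_interval[of w] by simp_all
  show "cell_left w < cell_left w + cell_len (length w)"
    using cell_len_pos by simp
next
  show "emeasure lebesgue (limsup_family (\<lambda>w. {cell_left w .. cell_left w + cell_len (length w)})) > 0"
    using emeasure_limsup_cells_pos unfolding cell_def[abs_def] .
qed (rule limsup_dilated_cells_empty)

end
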